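(* If $(T_1,T_2,c)\in\mathcal A_2^{\rm sp}$, then $T_1$ is not weakly embeddable in $T_2$; that is, there is no map $f:T_1\to T_2$ such that $x<_{T_1}y$ implies $f(x)<_{T_2}f(y)$.
   Context: For an ordinal $\gamma<\omega_1$, ${\rm ht}(\gamma)$ denotes the unique $\alpha$ with $\gamma\in[\omega\alpha,\omega\alpha+\omega)$. $\mathcal A$ denotes the set of all trees $T$ whose underlying set is $\{\langle\rangle\}\cup X$ for some $X\subseteq\omega_1$, where $\langle\rangle$ is the root (below every other element; considered to be of level $-1$), such that $T$ has height $\omega_1$, has no uncountable branch, is normal (two distinct elements of the same limit level have different sets of predecessors), and for every $\alpha<\omega_1$ the $\alpha$-th level ${\rm lev}_\alpha(T)$ is a subset of $[\omega\alpha,\omega\alpha+\omega)$ (so the tree height of $\gamma\ne\langle\rangle$ equals ${\rm ht}(\gamma)$). For $x,y\in T$, $x\cap_T y$ denotes the $<_T$-greatest element below or equal to both (the meet); $x\perp_T y$ means $x,y$ are $<_T$-incomparable. For $T_1,T_2\in\mathcal A$ and a pair $(x,y)\in{\rm lev}_\alpha(T_1)\times{\rm lev}_\alpha(T_2)$, $\alpha(x,y)$ denotes this $\alpha$. $\mathcal A_2^{\rm sp}$ is the set of all triples $(T_1,T_2,c)$ with $T_1,T_2\in\mathcal A$ and $c$ a function from $\bigcup_{\delta<\omega_1\text{ limit}}{\rm lev}_\delta(T_1)\times{\rm lev}_\delta(T_2)$ to $\omega$ such that whenever $c(x_1,y_1)=c(x_2,y_2)$ and $(x_1,y_1)\neq(x_2,y_2)$,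 then $\alpha(x_1,y_1)\ne\alpha(x_2,y_2)$, $x_1\perp_{T_1}x_2$, $y_1\perp_{T_2}y_2$, and ${\rm ht}(x_1\cap_{T_1}x_2)>{\rm ht}(y_1\cap_{T_2}y_2)$. *)

theory Defs
  imports "HOL-Library.Countable_Set"
begin

text \<open>
The countable ordinals are modelled by a wellordered type 'a that is
order-isomorphic to omega_1 (uncountable, every proper initial segment countable).
An ordinal gamma < omega_1 is written uniquely as omega*alpha + n; we represent it
by the pair (alpha, n) :: 'a * nat, so ht(gamma) = fst.  The root is None.
\<close>

type_synonym 'a node = "('a \<times> nat) option"
type_synonym 'a tree = "'a node set \<times> ('a node \<Rightarrow> 'a node \<Rightarrow> bool)"

definition omega1_type :: "'a::wellorder itself \<Rightarrow> bool" where
  "omega1_type _ \<longleftrightarrow> uncountable (UNIV :: 'a set) \<and> (\<forall>x::'a. countable {..<x})"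

definition ht :: "'a node \<Rightarrow> 'a" where
  "ht x = fst (the x)"

definition tlev :: "'a tree \<Rightarrow> 'a \<Rightarrow> 'a node set" where
  "tlev T \<alpha> = {x \<in> fst T. x \<noteq> None \<and> ht x = \<alpha>}"

definition is_limit :: "'a::wellorder \<Rightarrow> bool" where
  "is_limit \<alpha> \<longleftrightarrow> (\<exists>\<beta>. \<beta> < \<alpha>) \<and> (\<forall>\<beta><\<alpha>. \<exists>\<gamma>. \<beta> < \<gamma> \<and> \<gamma> < \<alpha>)"

definition tle :: "'a tree \<Rightarrow> 'a node \<Rightarrow> 'a node \<Rightarrow> bool" where
  "tle T x y \<longleftrightarrow> snd T x y \<or> x = y"

definition tcomp :: "'a tree \<Rightarrow> 'a node \<Rightarrow> 'a node \<Rightarrow> bool" where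
  "tcomp T x y \<longleftrightarrow> tle T x y \<or> tle T y x"

definition tchain :: "'a tree \<Rightarrow> 'a node set \<Rightarrow> bool" where
  "tchain T B \<longleftrightarrow> B \<subseteq> fst T \<and> (\<forall>x\<in>B. \<forall>y\<in>B. tcomp T x y)"

definition tbranch :: "'a tree \<Rightarrow> 'a node set \<Rightarrow> bool" where
  "tbranch T B \<longleftrightarrow> tchain T B \<and> (\<forall>C. tchain T C \<and> B \<subseteq> C \<longrightarrow> C = B)"

text \<open>Membership in the class A: a tree on {root} union X (X subset of omega_1),
levels lev_alpha inside [omega alpha, omega alpha + omega), height omega_1,
normal, no uncountable branch.\<close>
definition in_A :: "'a::wellorder tree \<Rightarrow> bool" where
  "in_A T \<longleftrightarrow>
     (let N = fst T; R = snd T in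
       None \<in> N
     \<and> (\<forall>x y. R x y \<longrightarrow> x \<in> N \<and> y \<in> N)
     \<and> (\<forall>x\<in>N. \<not> R x x)
     \<and> (\<forall>x\<in>N. \<forall>y\<in>N. \<forall>z\<in>N. R x y \<longrightarrow> R y z \<longrightarrow> R x z)
     \<and> (\<forall>x\<in>N. x \<noteq> None \<longrightarrow> R None x)
     \<and> (\<forall>x\<in>N. \<forall>y\<in>N. \<forall>z\<in>N. R y x \<longrightarrow> R z x \<longrightarrow> tcomp T y z)
     \<and> (\<forall>x\<in>N. \<forall>y\<in>N. x \<noteq> None \<longrightarrow> y \<noteq> None \<longrightarrow> R x y \<longrightarrow> ht x < ht y)
     \<and> (\<forall>x\<in>N. x \<noteq> None \<longrightarrow> (\<forall>\<beta><ht x. \<exists>y\<in>tlev T \<beta>. R y x))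
     \<and> (\<forall>\<alpha>. tlev T \<alpha> \<noteq> {})
     \<and> (\<forall>\<delta>. is_limit \<delta> \<longrightarrow> (\<forall>x\<in>tlev T \<delta>. \<forall>y\<in>tlev T \<delta>.
           {z. R z x} = {z. R z y} \<longrightarrow> x = y))
     \<and> (\<forall>B. tbranch T B \<longrightarrow> countable B))"

definition tmeet :: "'a tree \<Rightarrow> 'a node \<Rightarrow> 'a node \<Rightarrow> 'a node" where
  "tmeet T x y = (THE z. z \<in> fst T \<and> tle T z x \<and> tle T z y \<and>
                    (\<forall>w\<in>fst T. tle T w x \<and> tle T w y \<longrightarrow> tle T w z))"

definition tperp :: "'a tree \<Rightarrow> 'a node \<Rightarrow> 'a node \<Rightarrow> bool" where
  "tperp T x y \<longleftrightarrow> \<not> tcomp T x y"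

text \<open>ht(a) > ht(b) where the root has height -1.\<close>
definition ht_gt :: "'a::wellorder node \<Rightarrow> 'a node \<Rightarrow> bool" where
  "ht_gt a b \<longleftrightarrow> a \<noteq> None \<and> (b = None \<or> ht b < ht a)"

definition sp_dom :: "'a::wellorder tree \<Rightarrow> 'a tree \<Rightarrow> ('a node \<times> 'a node) set" where
  "sp_dom T1 T2 = (\<Union>\<delta>\<in>{\<delta>. is_limit \<delta>}. tlev T1 \<delta> \<times> tlev T2 \<delta>)"

definition in_A2sp :: "'a::wellorder tree \<Rightarrow> 'a tree \<Rightarrow> ('a node \<times> 'a node \<Rightarrow> nat) \<Rightarrow> bool" where
  "in_A2sp T1 T2 c \<longleftrightarrow> in_A T1 \<and> in_A T2 \<and>
     (\<forall>p\<in>sp_dom T1 T2. \<forall>q\<in>sp_dom T1 T2. c p = c q \<longrightarrow> p \<noteq> q \<longrightarrow>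
        (let (x1, y1) = p; (x2, y2) = q in
           ht x1 \<noteq> ht x2 \<and> tperp T1 x1 x2 \<and> tperp T2 y1 y2
           \<and> ht_gt (tmeet T1 x1 x2) (tmeet T2 y1 y2)))"

definition weakly_embeddable :: "'a tree \<Rightarrow> 'a tree \<Rightarrow> bool" where
  "weakly_embeddable T1 T2 \<longleftrightarrow> (\<exists>f. (\<forall>x\<in>fst T1. f x \<in> fst T2) \<and>
     (\<forall>x\<in>fst T1. \<forall>y\<in>fst T1. snd T1 x y \<longrightarrow> snd T2 (f x) (f y)))"

end

theory Submission
  imports Defs
begin

text \<open>Suppose \<open>f\<close> maps \<open>T\<^sub>1\<close> strictly increasingly into \<open>T\<^sub>2\<close>.
  By induction on height, \<open>ht x \<le> ht (f x)\<close>. The limit levels \<open>\<delta>\<close> that are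
  closed under \<open>f\<close> (nodes of height below \<open>\<delta>\<close> are mapped below \<open>\<delta>\<close>) form an
  uncountable set. On each of them pick \<open>x\<close> in \<open>T\<^sub>1\<close> and the node \<open>y\<close> of
  \<open>T\<^sub>2\<close> on the same level below \<open>f x\<close>; two of these pairs get the same colour.
  The meet \<open>z\<close> of their first coordinates lies strictly below both, so \<open>f z\<close>,
  having height below both levels, lies below both second coordinates and hence below their
  meet \<open>m\<close>. Thus \<open>ht z \<le> ht (f z) \<le> ht m\<close>, contradicting the colouring
  requirement \<open>ht z > ht m\<close>.\<close>

lemma in_A_root: "in_A T \<Longrightarrow> None \<in> fst T"
  unfolding in_A_def Let_def by (elim conjE)

lemma in_A_field [rule_format]: "in_A T \<Longrightarrow> \<forall>x y. snd T x y \<longrightarrow> x \<in> fst T \<and> y \<in> fst T"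
  unfolding in_A_def Let_def by (elim conjE)

lemma in_A_irrefl [rule_format]: "in_A T \<Longrightarrow> \<forall>x\<in>fst T. \<not> snd T x x"
  unfolding in_A_def Let_def by (elim conjE)

lemma in_A_trans_on [rule_format]:
  "in_A T \<Longrightarrow> \<forall>x\<in>fst T. \<forall>y\<in>fst T. \<forall>z\<in>fst T. snd T x y \<longrightarrow> snd T y z \<longrightarrow> snd T x z"
  unfolding in_A_def Let_def by (elim conjE)

lemma in_A_root_less [rule_format]: "in_A T \<Longrightarrow> \<forall>x\<in>fst T. x \<noteq> None \<longrightarrow> snd T None x"
  unfolding in_A_def Let_def by (elim conjE)

lemma in_A_preds_comparable_on [rule_format]:
  "in_A T \<Longrightarrow> \<forall>x\<in>fst T. \<forall>y\<in>fst T. \<forall>z\<in>fst T. snd T y x \<longrightarrow> snd T z x \<longrightarrow> tcomp T y z"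
  unfolding in_A_def Let_def by (elim conjE)

lemma in_A_ht_less_on [rule_format]:
  "in_A T \<Longrightarrow> \<forall>x\<in>fst T. \<forall>y\<in>fst T. x \<noteq> None \<longrightarrow> y \<noteq> None \<longrightarrow> snd T x y \<longrightarrow> ht x < ht y"
  unfolding in_A_def Let_def by (elim conjE)

lemma in_A_pred_at_level [rule_format]:
  "in_A T \<Longrightarrow> \<forall>x\<in>fst T. x \<noteq> None \<longrightarrow> (\<forall>\<beta><ht x. \<exists>y\<in>tlev T \<beta>. snd T y x)"
  unfolding in_A_def Let_def by (elim conjE)

lemma in_A_level_nonempty [rule_format]: "in_A T \<Longrightarrow> \<forall>\<alpha>. tlev T \<alpha> \<noteq> {}"
  unfolding in_A_def Let_def by (elim conjE)

lemma in_A_normal [rule_format]: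
  "in_A T \<Longrightarrow> \<forall>\<delta>. is_limit \<delta> \<longrightarrow>
     (\<forall>x\<in>tlev T \<delta>. \<forall>y\<in>tlev T \<delta>. {z. snd T z x} = {z. snd T z y} \<longrightarrow> x = y)"
  unfolding in_A_def Let_def by (elim conjE)

lemma in_A_trans: "in_A T \<Longrightarrow> snd T x y \<Longrightarrow> snd T y z \<Longrightarrow> snd T x z"
  using in_A_trans_on in_A_field by blast

lemma in_A_preds_comparable: "in_A T \<Longrightarrow> snd T y x \<Longrightarrow> snd T z x \<Longrightarrow> tcomp T y z"
  using in_A_preds_comparable_on in_A_field by blast

lemma in_A_ht_less: "in_A T \<Longrightarrow> snd T x y \<Longrightarrow> x \<noteq> None \<Longrightarrow> y \<noteq> None \<Longrightarrow> ht x < ht y"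
  using in_A_ht_less_on in_A_field by blast

lemma in_A_not_less_root: "in_A T \<Longrightarrow> \<not> snd T x None"
  by (metis in_A_field in_A_irrefl in_A_root_less in_A_trans)

lemma tlev_iff: "x \<in> tlev T \<alpha> \<longleftrightarrow> x \<in> fst T \<and> x \<noteq> None \<and> ht x = \<alpha>"
  by (simp add: tlev_def)

lemma tle_trans: "in_A T \<Longrightarrow> tle T a b \<Longrightarrow> tle T b c \<Longrightarrow> tle T a c"
  unfolding tle_def using in_A_trans by blast

lemma tle_antisym: "in_A T \<Longrightarrow> tle T a b \<Longrightarrow> tle T b a \<Longrightarrow> a = b"
  unfolding tle_def using in_A_trans in_A_irrefl in_A_field by blast

lemma tle_common_upper_comparable: "in_A T \<Longrightarrow> tle T a x \<Longrightarrow> tle T b x \<Longrightarrow> tcomp T a b"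
  using in_A_preds_comparable unfolding tle_def tcomp_def by blast

lemma tle_ht: "in_A T \<Longrightarrow> tle T a b \<Longrightarrow> a \<noteq> None \<Longrightarrow> b \<noteq> None \<and> ht a \<le> ht b"
  unfolding tle_def using in_A_ht_less in_A_not_less_root by (metis order.strict_implies_order order_refl)

lemma in_A_level_below:
  assumes "in_A T" "v \<in> fst T" "v \<noteq> None" "\<alpha> \<le> ht v"
  shows "\<exists>p\<in>tlev T \<alpha>. tle T p v"
proof (cases "\<alpha> = ht v")
  case True
  then show ?thesis using assms by (auto simp: tlev_iff tle_def)
next
  case False
  then have "\<alpha> < ht v" using assms(4) by simp
  then show ?thesis using in_A_pred_at_level[OF assms(1-3)] unfolding tle_def by blast
qed

lemma tle_common_upper_ht_le:
  assumes T: "in_A T" and "tle T w v" "tle T l v" "l \<noteq> None" "ht w \<le> ht l"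
  shows "tle T w l"
proof -
  have "tcomp T w l" using tle_common_upper_comparable[OF T] assms(2,3) .
  then show ?thesis
    using assms(4,5) in_A_ht_less[OF T] in_A_not_less_root[OF T] unfolding tcomp_def tle_def
    by (metis leD)
qed

lemma in_A_preds_of_level:
  assumes T: "in_A T" and q: "q \<in> tlev T \<eta>" and qv: "tle T q v"
  shows "{w. snd T w q} = {w. snd T w v \<and> (w = None \<or> ht w < \<eta>)}"
proof (rule set_eqI, rule iffI)
  have qN: "q \<in> fst T" "q \<noteq> None" "ht q = \<eta>" using q by (auto simp: tlev_iff)
  {
    fix w assume "w \<in> {w. snd T w q}"
    then have wq: "snd T w q" by simp
    have "snd T w v" using wq qv in_A_trans[OF T] unfolding tle_def by blast
    moreover have "w = None \<or> ht w < \<eta>" using in_A_ht_less[OF T wq _ qN(2)] qN(3) by blast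
    ultimately show "w \<in> {w. snd T w v \<and> (w = None \<or> ht w < \<eta>)}" by simp
  next
    fix w assume "w \<in> {w. snd T w v \<and> (w = None \<or> ht w < \<eta>)}"
    then have wv: "snd T w v" and w: "w = None \<or> ht w < \<eta>" by auto
    show "w \<in> {w. snd T w q}"
    proof (cases "w = None")
      case True
      then show ?thesis using in_A_root_less[OF T qN(1,2)] by simp
    next
      case False
      with w have "ht w < \<eta>" by blast
      then have "ht w \<le> ht q" using qN(3) by simp
      then have "tle T w q" using tle_common_upper_ht_le[OF T _ qv qN(2)] wv unfolding tle_def by blast
      moreover have "w \<noteq> q" using w False qN(3) by auto
      ultimately show ?thesis unfolding tle_def by simp
    qed
  }
qed

definition strict_sup :: "'a::wellorder set \<Rightarrow> 'a" where
  "strict_sup H = (LEAST \<gamma>. \<forall>h\<in>H. h < \<gamma>)"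

lemma strict_sup_greater: "\<forall>h\<in>H. h < u \<Longrightarrow> h \<in> H \<Longrightarrow> h < strict_sup H"
  unfolding strict_sup_def by (rule LeastI2[of _ u]) auto

lemma strict_sup_le: "\<forall>h\<in>H. h < u \<Longrightarrow> strict_sup H \<le> u"
  unfolding strict_sup_def by (rule Least_le)

lemma less_strict_sup: "\<beta> < strict_sup H \<Longrightarrow> \<exists>h\<in>H. \<beta> \<le> h"
  unfolding strict_sup_def using not_less_Least by (fastforce simp: not_less)

lemma is_limit_strict_sup:
  assumes "h0 \<in> H" "\<forall>h\<in>H. h < u" "\<And>h. h \<in> H \<Longrightarrow> \<exists>h'\<in>H. h < h'"
  shows "is_limit (strict_sup H)"
  unfolding is_limit_def
  using assms strict_sup_greater less_strict_sup by (meson order.strict_trans1)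

lemma in_A_segment_preds:
  assumes T: "in_A T" and v: "v \<in> fst T"
    and root: "None \<in> L" and below: "\<forall>w\<in>L. snd T w v"
    and down: "\<forall>w\<in>fst T. \<forall>l\<in>L. tle T w l \<longrightarrow> w \<in> L"
    and no_max: "\<forall>l\<in>L. \<exists>w\<in>L. snd T l w"
  defines "\<eta> \<equiv> strict_sup (ht ` (L - {None}))"
  shows "is_limit \<eta>" and "\<exists>p\<in>tlev T \<eta>. tle T p v \<and> {w. snd T w p} = L"
proof -
  define H where "H = ht ` (L - {None})"
  have vN: "v \<noteq> None" using below root in_A_not_less_root[OF T] by metis
  have H_below: "\<forall>h\<in>H. h < ht v"
    using below in_A_ht_less[OF T] vN unfolding H_def by blast
  have H_no_max: "\<exists>h'\<in>H. h < h'" if "h \<in> H" for h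
  proof -
    from that obtain l where l: "l \<in> L" "l \<noteq> None" "h = ht l" unfolding H_def by blast
    then obtain w where w: "w \<in> L" "snd T l w" using no_max by blast
    then have "w \<noteq> None" using in_A_not_less_root[OF T] by metis
    then have "ht w \<in> H" "h < ht w"
      using w l in_A_ht_less[OF T w(2)] unfolding H_def by auto
    then show ?thesis by blast
  qed
  obtain w0 where w0: "w0 \<in> L" "snd T None w0" using no_max root by blast
  then have "w0 \<noteq> None" using in_A_irrefl[OF T] in_A_root[OF T] by metis
  then have "ht w0 \<in> H" using w0 unfolding H_def by blast
  then show "is_limit \<eta>"
    using is_limit_strict_sup[OF _ H_below H_no_max] unfolding \<eta>_def H_def by blast
  have H_less: "\<forall>h\<in>H. h < \<eta>"
    using strict_sup_greater[OF H_below] unfolding \<eta>_def H_def by blast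
  have "\<eta> \<le> ht v" using strict_sup_le[OF H_below] unfolding \<eta>_def H_def .
  then obtain p where p: "p \<in> tlev T \<eta>" "tle T p v" using in_A_level_below[OF T v vN] by blast
  have "L = {w. snd T w v \<and> (w = None \<or> ht w < \<eta>)}"
  proof (rule set_eqI, rule iffI)
    fix w assume "w \<in> L"
    then show "w \<in> {w. snd T w v \<and> (w = None \<or> ht w < \<eta>)}"
      using below H_less unfolding H_def by blast
  next
    fix w assume "w \<in> {w. snd T w v \<and> (w = None \<or> ht w < \<eta>)}"
    then have wv: "snd T w v" and w: "w = None \<or> ht w < \<eta>" by auto
    show "w \<in> L"
    proof (cases "w = None")
      case False
      then obtain l where l: "l \<in> L" "l \<noteq> None" "ht w \<le> ht l"
        using w less_strict_sup unfolding \<eta>_def by blast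
      then have "tle T w l" using tle_common_upper_ht_le[OF T] wv below unfolding tle_def by blast
      then show ?thesis using down in_A_field[OF T wv] l(1) by blast
    qed (use root in simp)
  qed
  then show "\<exists>p\<in>tlev T \<eta>. tle T p v \<and> {w. snd T w p} = L"
    using p in_A_preds_of_level[OF T p] by blast
qed

text \<open>Without a meet, the common lower bounds of \<open>x\<close> and \<open>x'\<close> form a segment as in
  \<open>in_A_segment_preds\<close> for both \<open>x\<close> and \<open>x'\<close>; normality identifies the two level nodes it
  yields, and that node is a common lower bound above all the others.\<close>

lemma in_A_meet_exists:
  assumes T: "in_A T" and x: "x \<in> fst T" and x': "x' \<in> fst T"
  shows "\<exists>z\<in>fst T. tle T z x \<and> tle T z x' \<and> (\<forall>w\<in>fst T. tle T w x \<and> tle T w x' \<longrightarrow> tle T w z)"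
proof (rule ccontr)
  assume no_meet: "\<not> ?thesis"
  define L where "L = {w\<in>fst T. tle T w x \<and> tle T w x'}"
  have below: "\<forall>w\<in>L. snd T w x" "\<forall>w\<in>L. snd T w x'"
    using no_meet x x' unfolding L_def tle_def by auto
  have no_max: "\<forall>l\<in>L. \<exists>w\<in>L. snd T l w"
  proof
    fix l assume l: "l \<in> L"
    from no_meet l obtain w where w: "w \<in> L" "\<not> tle T w l" unfolding L_def by blast
    then have "tcomp T w l" using l tle_common_upper_comparable[OF T] unfolding L_def by blast
    then show "\<exists>w\<in>L. snd T l w" using w unfolding tcomp_def tle_def by blast
  qed
  have "tle T None v" if "v \<in> fst T" for v
    using in_A_root_less[OF T that] unfolding tle_def by (cases "v = None") auto
  then have root: "None \<in> L" using in_A_root[OF T] x x' unfolding L_def by blast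
  have down: "\<forall>w\<in>fst T. \<forall>l\<in>L. tle T w l \<longrightarrow> w \<in> L"
    using tle_trans[OF T] unfolding L_def by blast
  define \<eta> where "\<eta> = strict_sup (ht ` (L - {None}))"
  obtain p where p: "p \<in> tlev T \<eta>" "tle T p x" "{w. snd T w p} = L"
    using in_A_segment_preds(2)[OF T x root below(1) down no_max] unfolding \<eta>_def by blast
  obtain p' where p': "p' \<in> tlev T \<eta>" "tle T p' x'" "{w. snd T w p'} = L"
    using in_A_segment_preds(2)[OF T x' root below(2) down no_max] unfolding \<eta>_def by blast
  have "is_limit \<eta>"
    using in_A_segment_preds(1)[OF T x root below(1) down no_max] unfolding \<eta>_def .
  then have "p = p'" using in_A_normal[OF T _ p(1) p'(1)] p(3) p'(3) by blast
  then have "p \<in> L" using p p' unfolding L_def tlev_iff by blast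
  then obtain w where "w \<in> L" "snd T p w" using no_max by blast
  then show False using p(1,3) in_A_trans[OF T] in_A_irrefl[OF T] unfolding tlev_iff by blast
qed

lemma tmeet:
  assumes T: "in_A T" and "x \<in> fst T" "x' \<in> fst T"
  shows tmeet_in: "tmeet T x x' \<in> fst T"
    and tmeet_le_left: "tle T (tmeet T x x') x"
    and tmeet_le_right: "tle T (tmeet T x x') x'"
    and tmeet_greatest: "\<And>w. w \<in> fst T \<Longrightarrow> tle T w x \<Longrightarrow> tle T w x' \<Longrightarrow> tle T w (tmeet T x x')"
proof -
  obtain z where z: "z \<in> fst T" "tle T z x" "tle T z x'"
    and greatest: "\<forall>w\<in>fst T. tle T w x \<and> tle T w x' \<longrightarrow> tle T w z"
    using in_A_meet_exists[OF assms] by blast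
  have "tmeet T x x' = z"
    unfolding tmeet_def using z greatest tle_antisym[OF T] by (intro the_equality) blast+
  then show "tmeet T x x' \<in> fst T" "tle T (tmeet T x x') x" "tle T (tmeet T x x') x'"
    "\<And>w. w \<in> fst T \<Longrightarrow> tle T w x \<Longrightarrow> tle T w x' \<Longrightarrow> tle T w (tmeet T x x')"
    using z greatest by auto
qed

lemma omega1_countable_bounded:
  assumes "omega1_type TYPE('a::wellorder)" "countable (A::'a set)"
  shows "\<exists>u. \<forall>a\<in>A. a < u"
proof (rule ccontr)
  assume unbounded: "\<not> ?thesis"
  have "x \<in> (\<Union>a\<in>A. insert a {..<a})" for x
  proof -
    from unbounded obtain a where "a \<in> A" "x \<le> a" by (meson not_less)
    then show ?thesis by (auto simp: order.order_iff_strict)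
  qed
  then have "UNIV = (\<Union>a\<in>A. insert a {..<a})" by blast
  moreover have "countable (\<Union>a\<in>A. insert a {..<a})"
    using assms unfolding omega1_type_def by auto
  ultimately show False using assms(1) unfolding omega1_type_def by simp
qed

lemma omega1_unbounded_uncountable:
  assumes "omega1_type TYPE('a::wellorder)" "\<And>\<gamma>::'a. \<exists>\<delta>>\<gamma>. P \<delta>"
  shows "uncountable {\<delta>. P \<delta>}"
proof
  assume "countable {\<delta>. P \<delta>}"
  then obtain u where "\<forall>\<delta>\<in>{\<delta>. P \<delta>}. \<delta> < u" using omega1_countable_bounded[OF assms(1)] by blast
  then show False using assms(2)[of u] by auto
qed

lemma omega1_closure_points_unbounded:
  fixes F :: "'a::wellorder \<Rightarrow> 'a set"
  assumes \<omega>\<^sub>1: "omega1_type TYPE('a)" and F: "\<And>\<beta>. countable (F \<beta>)"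
  shows "\<exists>\<delta>>\<gamma>. is_limit \<delta> \<and> (\<forall>\<beta><\<delta>. \<forall>a\<in>F \<beta>. a < \<delta>)"
proof -
  have "\<forall>\<beta>. \<exists>u. \<beta> < u \<and> (\<forall>\<beta>'\<le>\<beta>. \<forall>a\<in>F \<beta>'. a < u)"
  proof
    fix \<beta>
    have "countable (insert \<beta> (\<Union>\<beta>'\<in>insert \<beta> {..<\<beta>}. F \<beta>'))"
      using \<omega>\<^sub>1 F unfolding omega1_type_def by auto
    then obtain u where "\<forall>a\<in>insert \<beta> (\<Union>\<beta>'\<in>insert \<beta> {..<\<beta>}. F \<beta>'). a < u"
      using omega1_countable_bounded[OF \<omega>\<^sub>1] by blast
    then show "\<exists>u. \<beta> < u \<and> (\<forall>\<beta>'\<le>\<beta>. \<forall>a\<in>F \<beta>'. a < u)"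
      by (auto simp: order.order_iff_strict)
  qed
  then obtain next_bound
    where nb: "\<forall>\<beta>. \<beta> < next_bound \<beta> \<and> (\<forall>\<beta>'\<le>\<beta>. \<forall>a\<in>F \<beta>'. a < next_bound \<beta>)"
    by (rule choice[THEN exE])
  define d where "d n = (next_bound ^^ n) \<gamma>" for n
  have d_Suc: "d (Suc n) = next_bound (d n)" for n by (simp add: d_def)
  obtain u where u: "\<forall>a\<in>range d. a < u" using omega1_countable_bounded[OF \<omega>\<^sub>1, of "range d"] by auto
  define \<delta> where "\<delta> = strict_sup (range d)"
  have d_less: "d n < \<delta>" for n using strict_sup_greater[OF u] unfolding \<delta>_def by blast
  have "\<exists>h'\<in>range d. h < h'" if "h \<in> range d" for h
    using that nb d_Suc by (metis rangeE rangeI)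
  then have "is_limit \<delta>" using is_limit_strict_sup[OF rangeI u] unfolding \<delta>_def by blast
  moreover have "a < \<delta>" if \<beta>: "\<beta> < \<delta>" and a: "a \<in> F \<beta>" for \<beta> a
  proof -
    obtain n where "\<beta> \<le> d n" using less_strict_sup[OF \<beta>[unfolded \<delta>_def]] by blast
    then have "a < d (Suc n)" using nb a d_Suc by simp
    then show ?thesis using d_less order.strict_trans by blast
  qed
  moreover have "\<gamma> < \<delta>" using d_less[of 0] by (simp add: d_def)
  ultimately show ?thesis by blast
qed

lemma countable_level_nodes: "countable {z::'a node. z \<noteq> None \<and> ht z = \<beta>}"
proof (rule countable_subset)
  show "{z::'a node. z \<noteq> None \<and> ht z = \<beta>} \<subseteq> Some ` ({\<beta>} \<times> UNIV)"
    by (auto simp: ht_def)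
qed simp

lemma omega1_uncountable_closed_limits:
  fixes g :: "'a::wellorder node \<Rightarrow> 'a"
  assumes \<omega>\<^sub>1: "omega1_type TYPE('a)"
  shows "uncountable {\<delta>. is_limit \<delta> \<and> (\<forall>z. z \<noteq> None \<and> ht z < \<delta> \<longrightarrow> g z < \<delta>)}"
proof -
  define F where "F \<beta> = g ` {z. z \<noteq> None \<and> ht z = \<beta>}" for \<beta>
  have "countable (F \<beta>)" for \<beta>
    unfolding F_def using countable_level_nodes by (rule countable_image)
  then have "uncountable {\<delta>. is_limit \<delta> \<and> (\<forall>\<beta><\<delta>. \<forall>a\<in>F \<beta>. a < \<delta>)}"
    by (rule omega1_unbounded_uncountable[OF \<omega>\<^sub>1 omega1_closure_points_unbounded[OF \<omega>\<^sub>1]])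
  moreover have "{\<delta>. is_limit \<delta> \<and> (\<forall>\<beta><\<delta>. \<forall>a\<in>F \<beta>. a < \<delta>)}
      \<subseteq> {\<delta>. is_limit \<delta> \<and> (\<forall>z. z \<noteq> None \<and> ht z < \<delta> \<longrightarrow> g z < \<delta>)}"
    unfolding F_def by auto
  ultimately show ?thesis using countable_subset by blast
qed

lemma uncountable_nat_colouring_collision:
  "uncountable S \<Longrightarrow> \<exists>x\<in>S. \<exists>y\<in>S. x \<noteq> y \<and> (g :: 'b \<Rightarrow> nat) x = g y"
  using countableI[of g S] unfolding inj_on_def by blast

definition tree_hom :: "'a tree \<Rightarrow> 'a tree \<Rightarrow> ('a node \<Rightarrow> 'a node) \<Rightarrow> bool" where
  "tree_hom T1 T2 f \<longleftrightarrow> (\<forall>x\<in>fst T1. f x \<in> fst T2) \<and> (\<forall>x y. snd T1 x y \<longrightarrow> snd T2 (f x) (f y))"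

lemma weakly_embeddable_tree_hom:
  "in_A T1 \<Longrightarrow> weakly_embeddable T1 T2 \<Longrightarrow> \<exists>f. tree_hom T1 T2 f"
  unfolding weakly_embeddable_def tree_hom_def using in_A_field by blast

lemma tree_hom_non_root:
  assumes "in_A T1" "in_A T2" "tree_hom T1 T2 f" "x \<in> fst T1" "x \<noteq> None"
  shows "f x \<noteq> None"
  using assms in_A_root_less[OF assms(1,4,5)] in_A_not_less_root[OF assms(2)]
  unfolding tree_hom_def by metis

lemma tree_hom_ht_le:
  assumes T1: "in_A T1" and T2: "in_A T2" and f: "tree_hom T1 T2 f"
  shows "x \<in> fst T1 \<Longrightarrow> x \<noteq> None \<Longrightarrow> ht x \<le> ht (f x)"
proof (induction "ht x" arbitrary: x rule: less_induct)
  case less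
  show ?case
  proof (rule ccontr)
    assume "\<not> ht x \<le> ht (f x)"
    then obtain y where y: "y \<in> tlev T1 (ht (f x))" "snd T1 y x"
      using in_A_pred_at_level[OF T1 less.prems] by (meson not_le)
    then have yN: "y \<in> fst T1" "y \<noteq> None" "ht y = ht (f x)" by (auto simp: tlev_iff)
    have "ht (f y) < ht (f x)"
      using in_A_ht_less[OF T2] y(2) f tree_hom_non_root[OF T1 T2 f] yN less.prems
      unfolding tree_hom_def by blast
    moreover have "ht y \<le> ht (f y)"
      using less.hyps[OF _ yN(1,2)] in_A_ht_less[OF T1 y(2) yN(2) less.prems(2)] by blast
    ultimately show False using yN(3) by simp
  qed
qed

lemma tree_hom_level_pair:
  assumes T1: "in_A T1" and T2: "in_A T2" and f: "tree_hom T1 T2 f"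
  shows "\<exists>x y. x \<in> tlev T1 \<delta> \<and> y \<in> tlev T2 \<delta> \<and> tle T2 y (f x)"
proof -
  obtain x where x: "x \<in> tlev T1 \<delta>" using in_A_level_nonempty[OF T1] by blast
  then have "x \<in> fst T1" "x \<noteq> None" "ht x = \<delta>" by (auto simp: tlev_iff)
  then have "f x \<in> fst T2" "f x \<noteq> None" "\<delta> \<le> ht (f x)"
    using f tree_hom_non_root[OF T1 T2 f] tree_hom_ht_le[OF T1 T2 f] unfolding tree_hom_def by auto
  then show ?thesis using x in_A_level_below[OF T2] by blast
qed

lemma tree_hom_pred_below_level:
  assumes T1: "in_A T1" and T2: "in_A T2" and f: "tree_hom T1 T2 f"
    and x: "x \<in> tlev T1 \<delta>" and y: "y \<in> tlev T2 \<delta>" and yx: "tle T2 y (f x)"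
    and zx: "snd T1 z x" and fz: "ht (f z) < \<delta>"
  shows "tle T2 (f z) y"
proof -
  have "tle T2 (f z) (f x)" using f zx unfolding tree_hom_def tle_def by blast
  then have "tcomp T2 (f z) y" using tle_common_upper_comparable[OF T2 _ yx] by blast
  moreover have "\<not> tle T2 y (f z)"
    using tle_ht[OF T2] y fz unfolding tlev_iff by (meson leD)
  ultimately show ?thesis unfolding tcomp_def by blast
qed

lemma tree_hom_level_pairs_same_colour:
  fixes c :: "'a::wellorder node \<times> 'a node \<Rightarrow> nat"
  assumes T1: "in_A T1" and T2: "in_A T2" and f: "tree_hom T1 T2 f" and S: "uncountable S"
  obtains \<delta>1 \<delta>2 x1 y1 x2 y2 where "\<delta>1 \<in> S" "\<delta>2 \<in> S" "\<delta>1 \<noteq> \<delta>2"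
    "x1 \<in> tlev T1 \<delta>1" "y1 \<in> tlev T2 \<delta>1" "tle T2 y1 (f x1)"
    "x2 \<in> tlev T1 \<delta>2" "y2 \<in> tlev T2 \<delta>2" "tle T2 y2 (f x2)"
    "c (x1, y1) = c (x2, y2)"
proof -
  have "\<forall>\<delta>. \<exists>p. fst p \<in> tlev T1 \<delta> \<and> snd p \<in> tlev T2 \<delta> \<and> tle T2 (snd p) (f (fst p))"
    using tree_hom_level_pair[OF T1 T2 f] by (metis fst_conv snd_conv)
  then obtain P where P: "\<forall>\<delta>. fst (P \<delta>) \<in> tlev T1 \<delta> \<and> snd (P \<delta>) \<in> tlev T2 \<delta>
      \<and> tle T2 (snd (P \<delta>)) (f (fst (P \<delta>)))"
    by (rule choice[THEN exE])
  from uncountable_nat_colouring_collision[OF S, of "c \<circ> P"]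
  obtain \<delta>1 \<delta>2 where "\<delta>1 \<in> S" "\<delta>2 \<in> S" "\<delta>1 \<noteq> \<delta>2" "c (P \<delta>1) = c (P \<delta>2)"
    by auto
  then show thesis
    using P by (intro that[of \<delta>1 \<delta>2 "fst (P \<delta>1)" "snd (P \<delta>1)" "fst (P \<delta>2)" "snd (P \<delta>2)"]) auto
qed

lemma tree_hom_meet_not_ht_gt:
  assumes T1: "in_A T1" and T2: "in_A T2" and f: "tree_hom T1 T2 f"
    and x1: "x1 \<in> tlev T1 \<delta>1" and y1: "y1 \<in> tlev T2 \<delta>1" and y1x1: "tle T2 y1 (f x1)"
    and x2: "x2 \<in> tlev T1 \<delta>2" and y2: "y2 \<in> tlev T2 \<delta>2" and y2x2: "tle T2 y2 (f x2)"
    and closed1: "\<And>z. z \<noteq> None \<Longrightarrow> ht z < \<delta>1 \<Longrightarrow> ht (f z) < \<delta>1"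
    and closed2: "\<And>z. z \<noteq> None \<Longrightarrow> ht z < \<delta>2 \<Longrightarrow> ht (f z) < \<delta>2"
    and perp: "tperp T1 x1 x2"
  shows "\<not> ht_gt (tmeet T1 x1 x2) (tmeet T2 y1 y2)"
proof
  assume gt: "ht_gt (tmeet T1 x1 x2) (tmeet T2 y1 y2)"
  define z where "z = tmeet T1 x1 x2"
  define m where "m = tmeet T2 y1 y2"
  have x1N: "x1 \<in> fst T1" "x1 \<noteq> None" "ht x1 = \<delta>1" and x2N: "x2 \<in> fst T1" "x2 \<noteq> None" "ht x2 = \<delta>2"
    and yN: "y1 \<in> fst T2" "y2 \<in> fst T2"
    using x1 x2 y1 y2 by (auto simp: tlev_iff)
  have z: "z \<in> fst T1" "tle T1 z x1" "tle T1 z x2"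
    unfolding z_def using tmeet_in tmeet_le_left tmeet_le_right T1 x1N(1) x2N(1) by blast+
  have zN: "z \<noteq> None" and m: "m = None \<or> ht m < ht z"
    using gt unfolding ht_gt_def z_def m_def by auto
  have "snd T1 z x1" "snd T1 z x2"
    using z perp unfolding tperp_def tcomp_def tle_def by auto
  then have "ht (f z) < \<delta>1" "ht (f z) < \<delta>2"
    using closed1 closed2 zN in_A_ht_less[OF T1] x1N x2N by auto
  then have "tle T2 (f z) y1" "tle T2 (f z) y2"
    using tree_hom_pred_below_level[OF T1 T2 f] x1 y1 y1x1 x2 y2 y2x2 \<open>snd T1 z x1\<close> \<open>snd T1 z x2\<close>
    by blast+
  moreover have "f z \<in> fst T2" "f z \<noteq> None"
    using f z(1) zN tree_hom_non_root[OF T1 T2 f] unfolding tree_hom_def by auto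
  ultimately have "tle T2 (f z) m" unfolding m_def using tmeet_greatest[OF T2 yN] by blast
  then have "m \<noteq> None" "ht (f z) \<le> ht m" using tle_ht[OF T2] \<open>f z \<noteq> None\<close> by blast+
  moreover have "ht z \<le> ht (f z)" using tree_hom_ht_le[OF T1 T2 f z(1) zN] .
  ultimately show False using m by (metis leD order_trans)
qed

theorem claim3p4:
  fixes T1 T2 :: "'a::wellorder tree" and c :: "'a node \<times> 'a node \<Rightarrow> nat"
  assumes "omega1_type TYPE('a)"
    and "in_A2sp T1 T2 c"
  shows "\<not> weakly_embeddable T1 T2"
proof
  assume "weakly_embeddable T1 T2"
  have T1: "in_A T1" and T2: "in_A T2" using assms(2) unfolding in_A2sp_def by auto
  obtain f where f: "tree_hom T1 T2 f"
    using weakly_embeddable_tree_hom[OF T1 \<open>weakly_embeddable T1 T2\<close>] by blast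
  define closed where "closed = {\<delta>. is_limit \<delta> \<and> (\<forall>z. z \<noteq> None \<and> ht z < \<delta> \<longrightarrow> ht (f z) < \<delta>)}"
  obtain \<delta>1 \<delta>2 x1 y1 x2 y2 where \<delta>: "\<delta>1 \<in> closed" "\<delta>2 \<in> closed" "\<delta>1 \<noteq> \<delta>2"
    and p1: "x1 \<in> tlev T1 \<delta>1" "y1 \<in> tlev T2 \<delta>1" "tle T2 y1 (f x1)"
    and p2: "x2 \<in> tlev T1 \<delta>2" "y2 \<in> tlev T2 \<delta>2" "tle T2 y2 (f x2)"
    and colour: "c (x1, y1) = c (x2, y2)"
    using omega1_uncountable_closed_limits[OF assms(1)] unfolding closed_def
    by (rule tree_hom_level_pairs_same_colour[OF T1 T2 f])
  have "(x1, y1) \<in> sp_dom T1 T2" "(x2, y2) \<in> sp_dom T1 T2" "(x1, y1) \<noteq> (x2, y2)"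
    using p1 p2 \<delta> unfolding sp_dom_def closed_def by (auto simp: tlev_iff)
  then have "tperp T1 x1 x2 \<and> ht_gt (tmeet T1 x1 x2) (tmeet T2 y1 y2)"
    using assms(2) colour unfolding in_A2sp_def by fastforce
  moreover have "ht (f z) < \<delta>" if "\<delta> \<in> closed" "z \<noteq> None" "ht z < \<delta>" for \<delta> z
    using that unfolding closed_def by blast
  ultimately show False using tree_hom_meet_not_ht_gt[OF T1 T2 f p1 p2] \<delta>(1,2) by blast
qed

end
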